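(* Let $k\ge 1$, $n\ge 2$, $\mathbf C=(c_0,\dots,c_k)\in\{0,1\}^{k+1}$, and $\gamma$ Euler's constant. Put $\lambda=c_0(n-1)+c_1k(\log(n-1)+\gamma)+\frac{\pi^2}{6}\sum_{\beta=2}^kc_\beta\binom{k}{\beta}$ and $\lambda'=c'_0(n-1)+c'_1k(\log(n-1)+\gamma)+\frac{\pi^2}{6}\sum_{\beta=2}^kc'_\beta\binom{k}{\beta}$. Then: (i) for $0\le m\le n$, $O_{\mathbf C}(n,m)\le O_{\mathbf C'\max}(n,n-m)$; (ii) $\dfrac{\sum_{m=0}^nO_{\mathbf C\max}(n,m)}{\sum_{m=0}^nO_{\mathbf C}(n,m)}\le\exp(\lambda)$; (iii) $\dfrac{\sum_{m=0}^nO_{\mathbf C'\max}(n,m)}{\sum_{m=0}^nO_{\mathbf C}(n,m)}\le\exp(\lambda')$; (iv) for $k=1$, $\mathbf C=(0,1)$, with $s_u(n,m)$ the unsigned Stirling numbers of the first kind and $s_{u\max}(n,m)=\frac{(n-1)!}{(m-1)!}\left(\sum_{i=1}^{n-1}\frac1i\right)^{m-1}$ for $1\le m\le n$ (and $0$ for $m=0$), $$\frac{\sum_{m=0}^ns_{u\max}(n,m)}{\sum_{m=0}^ns_u(n,m)}\le\frac{n-1}{n}\exp\Big(\sum_{j=2}^n\frac1{j-1}-\log(n-1)\Big)\le\exp(\gamma)\le 1.7811.$$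
   Context: Fix integers $k\ge 1$, $n\ge 2$ and $\mathbf C=(c_0,\dots,c_k)\in\{0,1\}^{k+1}$; put $\mathbf C'=(1,\dots,1)-\mathbf C=(c'_0,\dots,c'_k)$. Consider $k$-tuples $(\pi_1,\dots,\pi_k)$ of permutations of $\{1,\dots,n\}$. A position $\alpha$ is a record of a permutation $\pi$ if $\pi(\alpha)<\pi(\alpha')$ for every $\alpha'<\alpha$ (position $1$ is always a record). For a tuple, let $l_\alpha$ be the number of $\beta\in\{1,\dots,k\}$ for which $\alpha$ is a record of $\pi_\beta$. The $\mathbf C$ sequential optimization set is $S=\{\alpha:c_{l_\alpha}=1\}$, with weight $|S|$; $O_{\mathbf C}(n,m)$ is the number of $k$-tuples of weight $m$ (for integer $m$), and $O_{\mathbf C'}$ is the same with $\mathbf C'$. For $j\ge2$ and $X\in\mathbb R^{k+1}$, $F_j(X)=\sum_{\beta=0}^k\binom{k}{\beta}\frac{x_\beta}{(j-1)^\beta}$. Let $\mathbf H_n\mathbf X^T=\sum_{\beta=0}^k x_\beta\binom{k}{\beta}\sum_{j=1}^{n-1}j^{-\beta}$. For $1\le m\le n$, $O_{\mathbf C\max}(n,m+c_k-1)=\frac{(n-1)!^k}{(m-1)!}(\mathbf H_n\mathbf C^T)^{m-1}\prod_{i=1}^{n-m}F_{i+1}(\mathbf C')$ and $O_{\mathbf C'\max}(n,m+c'_k-1)=\frac{(n-1)!^k}{(m-1)!}(\mathbf H_n\mathbf C'^T)^{m-1}\prod_{i=1}^{n-m}F_{i+1}(\mathbf C)$; at integer arguments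 outside these ranges $O_{\mathbf C\max}$ and $O_{\mathbf C'\max}$ are taken to be $0$. Empty products equal $1$; $\log$ is the natural logarithm. *)

theory Defs
  imports "HOL-Analysis.Analysis" "HOL-Combinatorics.Permutations" "HOL-Combinatorics.Stirling"
begin

definition is_record :: "(nat \<Rightarrow> nat) \<Rightarrow> nat \<Rightarrow> bool" where
  "is_record \<pi> \<alpha> \<longleftrightarrow> (\<forall>\<alpha>'\<in>{1..<\<alpha>}. \<pi> \<alpha> < \<pi> \<alpha>')"

definition perm_tuples :: "nat \<Rightarrow> nat \<Rightarrow> (nat \<Rightarrow> nat) list set" where
  "perm_tuples k n = {ps. length ps = k \<and> (\<forall>\<pi>\<in>set ps. \<pi> permutes {1..n})}"

definition rec_count :: "(nat \<Rightarrow> nat) list \<Rightarrow> nat \<Rightarrow> nat" where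
  "rec_count ps \<alpha> = length (filter (\<lambda>\<pi>. is_record \<pi> \<alpha>) ps)"

definition opt_set :: "(nat \<Rightarrow> nat) \<Rightarrow> nat \<Rightarrow> (nat \<Rightarrow> nat) list \<Rightarrow> nat set" where
  "opt_set c n ps = {\<alpha>\<in>{1..n}. c (rec_count ps \<alpha>) = 1}"

definition O_C :: "(nat \<Rightarrow> nat) \<Rightarrow> nat \<Rightarrow> nat \<Rightarrow> nat \<Rightarrow> nat" where
  "O_C c k n m = card {ps \<in> perm_tuples k n. card (opt_set c n ps) = m}"

definition compl_vec :: "(nat \<Rightarrow> nat) \<Rightarrow> nat \<Rightarrow> nat" where
  "compl_vec c = (\<lambda>\<beta>. 1 - c \<beta>)"

definition H_vec :: "(nat \<Rightarrow> nat) \<Rightarrow> nat \<Rightarrow> nat \<Rightarrow> real" where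
  "H_vec c k n = (\<Sum>\<beta>=0..k. real (c \<beta>) * real (k choose \<beta>) * (\<Sum>j=1..n-1. 1 / real j ^ \<beta>))"

definition F_vec :: "(nat \<Rightarrow> nat) \<Rightarrow> nat \<Rightarrow> nat \<Rightarrow> real" where
  "F_vec c k j = (\<Sum>\<beta>=0..k. real (k choose \<beta>) * real (c \<beta>) / (real j - 1) ^ \<beta>)"

text \<open>O_{C max}(n, j) for integer j: given by the formula at j = m + c_k - 1 with 1 <= m <= n,
  and 0 otherwise. Its companion O_{C' max} is Omax (compl_vec c), whose product uses
  F(C'') = F(C) since C has 0/1 entries.\<close>
definition Omax :: "(nat \<Rightarrow> nat) \<Rightarrow> nat \<Rightarrow> nat \<Rightarrow> int \<Rightarrow> real" where
  "Omax c k n j =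
     (if 1 \<le> j + 1 - int (c k) \<and> j + 1 - int (c k) \<le> int n then
        (let m = nat (j + 1 - int (c k)) in
           fact (n - 1) ^ k / fact (m - 1) * H_vec c k n ^ (m - 1)
           * (\<Prod>i=1..n-m. F_vec (compl_vec c) k (i + 1)))
      else 0)"

definition su_max :: "nat \<Rightarrow> nat \<Rightarrow> real" where
  "su_max n m = (if 1 \<le> m \<and> m \<le> n then
       fact (n - 1) / fact (m - 1) * (\<Sum>i=1..n-1. 1 / real i) ^ (m - 1) else 0)"

end

theory Submission
  imports Defs
begin

text \<open>Deleting position \<open>n + 1\<close> of a permutation of \<open>{1..n+1}\<close> and closing the gap left by its
  value is a bijection onto pairs (permutation of \<open>{1..n}\<close>, deleted value), applied
  componentwise to \<open>k\<close>-tuples. It keeps the records at positions \<open>\<le> n\<close>, and position \<open>n + 1\<close> is a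
  record exactly when the deleted value is \<open>1\<close>. Counting the lists of deleted values by their number
  of ones gives the recurrence
  \<open>O\<^sub>C(n+1, w) = n\<^sup>k (F\<^sub>n\<^sub>+\<^sub>1(C) O\<^sub>C(n, w-1) + F\<^sub>n\<^sub>+\<^sub>1(C') O\<^sub>C(n, w))\<close>.
  Because \<open>H\<^sub>n\<^sub>+\<^sub>1 = H\<^sub>n + F\<^sub>n\<^sub>+\<^sub>1(C)\<close>, \<open>F\<^sub>j\<close> decreases in \<open>j\<close> and
  \<open>(H + F)\<^sup>q \<ge> H\<^sup>q + q F H\<^sup>q\<^sup>-\<^sup>1\<close>, the closed form \<open>O\<^sub>C\<^sub>m\<^sub>a\<^sub>x\<close> satisfies the same recurrence
  with \<open>\<ge>\<close>, so \<open>O\<^sub>C \<le> O\<^sub>C\<^sub>m\<^sub>a\<^sub>x\<close> by induction on \<open>n\<close>; (i) follows since the optimization sets of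
  \<open>C\<close> and \<open>C'\<close> are complementary.
  Summing over \<open>m\<close>, the ratio in (ii) is at most \<open>\<Sum>\<^sub>p\<^sub><\<^sub>n H\<^sub>n\<^sup>p / p! (1 - p/n)\<^sup>k \<le> exp (H\<^sub>n e\<^sup>-\<^sup>k\<^sup>/\<^sup>n)\<close>,
  and \<open>H\<^sub>n e\<^sup>-\<^sup>k\<^sup>/\<^sup>n \<le> \<lambda>\<close> because \<open>\<Sum>\<^sub>j j\<^sup>-\<^sup>\<beta> \<le> \<pi>\<^sup>2/6\<close> for \<open>\<beta> \<ge> 2\<close> and
  \<open>H\<^sub>n\<^sub>-\<^sub>1 e\<^sup>-\<^sup>1\<^sup>/\<^sup>n \<le> log (n - 1) + \<gamma>\<close> (the case \<open>n = 2\<close> is checked directly); (iii) is (ii) for \<open>C'\<close>.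
  In (iv) the denominator is \<open>n!\<close> and the numerator is \<open>(n - 1)!\<close> times a truncated exponential
  series of the harmonic number \<open>H\<^sub>n\<^sub>-\<^sub>1 \<le> \<gamma> + log n\<close>.\<close>

section \<open>Deleting the last position of a permutation\<close>

definition close_gap :: "nat \<Rightarrow> nat \<Rightarrow> nat" where
  "close_gap v x = (if x < v then x else x - 1)"

lemma close_gap_eq_iff: "x \<noteq> v \<Longrightarrow> y \<noteq> v \<Longrightarrow> close_gap v x = close_gap v y \<longleftrightarrow> x = y"
  by (auto simp: close_gap_def)

lemma close_gap_less_iff: "x \<noteq> v \<Longrightarrow> y \<noteq> v \<Longrightarrow> close_gap v x < close_gap v y \<longleftrightarrow> x < y"
  by (auto simp: close_gap_def)

definition perm_drop_last :: "nat \<Rightarrow> (nat \<Rightarrow> nat) \<Rightarrow> nat \<Rightarrow> nat" where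
  "perm_drop_last n p = (\<lambda>a. if a \<in> {1..n} then close_gap (p (Suc n)) (p a) else a)"

lemma permutes_Suc_neq_last:
  assumes "p permutes {1..Suc n}" "a \<in> {1..n}"
  shows "p a \<noteq> p (Suc n)"
proof
  assume "p a = p (Suc n)"
  then have "a = Suc n" using permutes_inj[OF assms(1)] by (simp add: inj_eq)
  then show False using assms(2) by simp
qed

lemma perm_drop_last_permutes:
  assumes p: "p permutes {1..Suc n}"
  shows "perm_drop_last n p permutes {1..n}"
proof (rule bij_imp_permutes)
  have inj: "inj_on (perm_drop_last n p) {1..n}"
  proof (rule inj_onI)
    fix a b assume a: "a \<in> {1..n}" and b: "b \<in> {1..n}"
      and eq: "perm_drop_last n p a = perm_drop_last n p b"
    then have "p a = p b"
      using close_gap_eq_iff[OF permutes_Suc_neq_last[OF p a] permutes_Suc_neq_last[OF p b]]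
      by (simp add: perm_drop_last_def)
    then show "a = b" using permutes_inj[OF p] by (simp add: inj_eq)
  qed
  have "perm_drop_last n p a \<in> {1..n}" if a: "a \<in> {1..n}" for a
  proof -
    have "p a \<in> {1..Suc n}" "p (Suc n) \<in> {1..Suc n}" "p a \<noteq> p (Suc n)"
      using a permutes_Suc_neq_last[OF p a] permutes_in_image[OF p] by auto
    then show ?thesis using a by (auto simp: perm_drop_last_def close_gap_def)
  qed
  then have "perm_drop_last n p ` {1..n} \<subseteq> {1..n}" by blast
  then show "bij_betw (perm_drop_last n p) {1..n} {1..n}"
    using inj endo_inj_surj[OF _ _ inj] by (simp add: bij_betw_def)
  show "x \<notin> {1..n} \<Longrightarrow> perm_drop_last n p x = x" for x
    by (auto simp: perm_drop_last_def)
qed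

lemma is_record_perm_drop_last:
  assumes p: "p permutes {1..Suc n}" and a: "a \<in> {1..n}"
  shows "is_record (perm_drop_last n p) a \<longleftrightarrow> is_record p a"
proof -
  have "perm_drop_last n p a < perm_drop_last n p b \<longleftrightarrow> p a < p b" if "b \<in> {1..<a}" for b
    using that a permutes_Suc_neq_last[OF p, of a] permutes_Suc_neq_last[OF p, of b]
    by (simp add: perm_drop_last_def close_gap_less_iff)
  then show ?thesis by (simp add: is_record_def)
qed

lemma is_record_last_iff:
  assumes p: "p permutes {1..Suc n}"
  shows "is_record p (Suc n) \<longleftrightarrow> p (Suc n) = 1"
proof
  assume rec: "is_record p (Suc n)"
  have "1 \<in> p ` {1..Suc n}" using permutes_image[OF p] by simp
  then obtain b where b: "b \<in> {1..Suc n}" "p b = 1" by (metis imageE)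
  show "p (Suc n) = 1"
  proof (rule ccontr)
    assume "p (Suc n) \<noteq> 1"
    then have "b \<in> {1..<Suc n}" using b by (cases "b = Suc n") auto
    then have "p (Suc n) < p b" using rec by (simp add: is_record_def)
    then show False using b permutes_in_image[OF p, of "Suc n"] by simp
  qed
next
  assume last: "p (Suc n) = 1"
  show "is_record p (Suc n)"
    unfolding is_record_def
  proof
    fix b assume "b \<in> {1..<Suc n}"
    then have "p b \<in> {1..Suc n}" "p b \<noteq> p (Suc n)"
      using permutes_Suc_neq_last[OF p] permutes_in_image[OF p] by auto
    then show "p (Suc n) < p b" using last by simp
  qed
qed

lemma perm_drop_last_eq_imp_eq:
  assumes p: "p permutes {1..Suc n}" and q: "q permutes {1..Suc n}"
    and drop: "perm_drop_last n p = perm_drop_last n q" and last: "p (Suc n) = q (Suc n)"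
  shows "p = q"
proof
  fix a
  consider "a \<in> {1..n}" | "a = Suc n" | "a \<notin> {1..Suc n}" by force
  then show "p a = q a"
  proof cases
    case 1
    then have "close_gap (p (Suc n)) (p a) = close_gap (p (Suc n)) (q a)"
      using fun_cong[OF drop, of a] last by (simp add: perm_drop_last_def)
    then show ?thesis
      using close_gap_eq_iff[of "p a" "p (Suc n)" "q a"] permutes_Suc_neq_last[OF p 1]
        permutes_Suc_neq_last[OF q 1] last
      by simp
  qed (use last permutes_not_in[OF p] permutes_not_in[OF q] in auto)
qed

definition value_lists :: "nat \<Rightarrow> nat \<Rightarrow> nat list set" where
  "value_lists k N = {vs. set vs \<subseteq> {1..N} \<and> length vs = k}"

lemma finite_value_lists: "finite (value_lists k N)"
  unfolding value_lists_def by (intro finite_lists_length_eq) simp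

lemma card_value_lists: "card (value_lists k N) = N ^ k"
  unfolding value_lists_def by (subst card_lists_length_eq) auto

lemma perm_tuples_eq_lists: "perm_tuples k n = {ps. set ps \<subseteq> {p. p permutes {1..n}} \<and> length ps = k}"
  by (auto simp: perm_tuples_def)

lemma finite_perm_tuples: "finite (perm_tuples k n)"
  unfolding perm_tuples_eq_lists by (intro finite_lists_length_eq finite_permutations) simp

lemma card_perm_tuples: "card (perm_tuples k n) = fact n ^ k"
  unfolding perm_tuples_eq_lists
  by (subst card_lists_length_eq) (auto intro: finite_permutations simp: card_permutations)

definition split_last :: "nat \<Rightarrow> (nat \<Rightarrow> nat) list \<Rightarrow> (nat \<Rightarrow> nat) list \<times> nat list" where
  "split_last n ps = (map (perm_drop_last n) ps, map (\<lambda>p. p (Suc n)) ps)"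

lemma inj_on_split_last: "inj_on (split_last n) (perm_tuples k (Suc n))"
proof (rule inj_onI)
  fix ps qs assume ps: "ps \<in> perm_tuples k (Suc n)" and qs: "qs \<in> perm_tuples k (Suc n)"
    and eq: "split_last n ps = split_last n qs"
  have len: "length ps = length qs" using ps qs by (simp add: perm_tuples_def)
  show "ps = qs"
  proof (rule nth_equalityI[OF len])
    fix i assume i: "i < length ps"
    show "ps ! i = qs ! i"
    proof (rule perm_drop_last_eq_imp_eq)
      show "ps ! i permutes {1..Suc n}" "qs ! i permutes {1..Suc n}"
        using ps qs i len by (auto simp: perm_tuples_def)
      have "map (perm_drop_last n) ps ! i = map (perm_drop_last n) qs ! i"
        and "map (\<lambda>p. p (Suc n)) ps ! i = map (\<lambda>p. p (Suc n)) qs ! i"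
        using eq by (simp_all add: split_last_def)
      then show "perm_drop_last n (ps ! i) = perm_drop_last n (qs ! i)" "(ps ! i) (Suc n) = (qs ! i) (Suc n)"
        using i len by simp_all
    qed
  qed
qed

text \<open>Surjectivity comes for free by counting: both sides have \<open>(n + 1)!\<^sup>k\<close> elements.\<close>

lemma bij_betw_split_last:
  "bij_betw (split_last n) (perm_tuples k (Suc n)) (perm_tuples k n \<times> value_lists k (Suc n))"
proof -
  have "split_last n ps \<in> perm_tuples k n \<times> value_lists k (Suc n)" if "ps \<in> perm_tuples k (Suc n)" for ps
  proof -
    have "perm_drop_last n p permutes {1..n} \<and> p (Suc n) \<in> {1..Suc n}" if "p \<in> set ps" for p
    proof -
      have p: "p permutes {1..Suc n}" using that \<open>ps \<in> perm_tuples k (Suc n)\<close> by (simp add: perm_tuples_def)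
      show ?thesis using perm_drop_last_permutes[OF p] permutes_in_image[OF p, of "Suc n"] by simp
    qed
    then show ?thesis
      using \<open>ps \<in> perm_tuples k (Suc n)\<close> by (auto simp: split_last_def perm_tuples_def value_lists_def)
  qed
  then have "split_last n ` perm_tuples k (Suc n) \<subseteq> perm_tuples k n \<times> value_lists k (Suc n)" by blast
  moreover have "card (split_last n ` perm_tuples k (Suc n)) = card (perm_tuples k n \<times> value_lists k (Suc n))"
  proof -
    have "fact (Suc n) ^ k = fact n ^ k * Suc n ^ k"
      unfolding fact_Suc of_nat_id power_mult_distrib by (rule mult.commute)
    then show ?thesis
      by (simp add: card_image[OF inj_on_split_last] card_cartesian_product card_perm_tuples card_value_lists)
  qed
  ultimately have "split_last n ` perm_tuples k (Suc n) = perm_tuples k n \<times> value_lists k (Suc n)"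
    by (intro card_subset_eq finite_cartesian_product finite_perm_tuples finite_value_lists)
  then show ?thesis using inj_on_split_last by (simp add: bij_betw_def)
qed

lemma card_opt_set_Suc:
  assumes ps: "ps \<in> perm_tuples k (Suc n)"
  shows "card (opt_set c (Suc n) ps) =
    card (opt_set c n (fst (split_last n ps))) + (if c (count_list (snd (split_last n ps)) 1) = 1 then 1 else 0)"
proof -
  have perms: "\<forall>p\<in>set ps. p permutes {1..Suc n}" using ps by (simp add: perm_tuples_def)
  have low: "rec_count ps a = rec_count (fst (split_last n ps)) a" if "a \<in> {1..n}" for a
    using perms is_record_perm_drop_last[OF _ that]
    by (simp add: rec_count_def split_last_def filter_map o_def cong: filter_cong)
  have "filter (\<lambda>p. is_record p (Suc n)) ps = filter (\<lambda>p. 1 = p (Suc n)) ps"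
    using perms is_record_last_iff by (intro filter_cong) auto
  then have last: "rec_count ps (Suc n) = count_list (snd (split_last n ps)) 1"
    by (simp add: rec_count_def split_last_def count_list_eq_length_filter filter_map o_def)
  have "opt_set c (Suc n) ps = {a\<in>{1..n}. c (rec_count ps a) = 1} \<union> {a\<in>{Suc n}. c (rec_count ps a) = 1}"
    by (auto simp: opt_set_def)
  also have "\<dots> = opt_set c n (fst (split_last n ps))
      \<union> (if c (count_list (snd (split_last n ps)) 1) = 1 then {Suc n} else {})"
    using low last by (auto simp: opt_set_def)
  finally show ?thesis by (simp add: opt_set_def)
qed

section \<open>The recurrence for \<open>O\<^sub>C\<close>\<close>

lemma card_product_filter:
  assumes "finite A" "finite B"
  shows "card {y \<in> A \<times> B. P (fst y) (snd y)} = (\<Sum>b\<in>B. card {a \<in> A. P a b})"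
proof -
  have "{y \<in> A \<times> B. P (fst y) (snd y)} = prod.swap ` (SIGMA b:B. {a \<in> A. P a b})" by auto
  then show ?thesis using assms by (simp add: card_image)
qed

lemma card_value_lists_count:
  "card {vs \<in> value_lists k (Suc n). count_list vs 1 = b} = (k choose b) * n ^ (k - b)"
proof (induction k arbitrary: b)
  case 0
  have "{vs \<in> value_lists 0 (Suc n). count_list vs 1 = b} = (if b = 0 then {[]} else {})"
    by (auto simp: value_lists_def)
  then show ?case by simp
next
  case (Suc k)
  let ?V = "value_lists k (Suc n)"
  have lists_Suc: "value_lists (Suc k) (Suc n) = (\<lambda>(xs, x). x # xs) ` (?V \<times> {1..Suc n})"
    unfolding value_lists_def by (rule lists_length_Suc_eq)
  have "{vs \<in> value_lists (Suc k) (Suc n). count_list vs 1 = b}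
      = (\<lambda>(xs, x). x # xs) ` {y \<in> ?V \<times> {1..Suc n}. count_list (snd y # fst y) 1 = b}"
    unfolding lists_Suc Compr_image_eq by (simp only: split_def)
  moreover have "inj (\<lambda>(xs, x). x # xs :: nat list)" by (auto simp: inj_def)
  ultimately have "card {vs \<in> value_lists (Suc k) (Suc n). count_list vs 1 = b}
      = card {y \<in> ?V \<times> {1..Suc n}. count_list (snd y # fst y) 1 = b}"
    by (simp add: card_image inj_on_subset)
  also have "\<dots> = (\<Sum>x\<in>{1..Suc n}. card {xs \<in> ?V. count_list (x # xs) 1 = b})"
    by (rule card_product_filter[OF finite_value_lists finite_atLeastAtMost])
  also have "\<dots> = card {xs \<in> ?V. Suc (count_list xs 1) = b} + n * card {xs \<in> ?V. count_list xs 1 = b}"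
  proof -
    have "(\<Sum>x\<in>{2..Suc n}. card {xs \<in> ?V. count_list (x # xs) 1 = b})
        = (\<Sum>x\<in>{2..Suc n}. card {xs \<in> ?V. count_list xs 1 = b})"
      by (rule sum.cong) auto
    moreover have "{1..Suc n} = insert 1 {2..Suc n}" by auto
    ultimately show ?thesis by simp
  qed
  also have "\<dots> = (Suc k choose b) * n ^ (Suc k - b)"
  proof (cases b)
    case (Suc b')
    have "n * ((k choose b) * n ^ (k - b)) = (k choose b) * n ^ (k - b')"
    proof (cases "b' < k")
      case True
      then have "k - b' = Suc (k - b)" using Suc by simp
      then show ?thesis by (simp add: mult.left_commute)
    qed (use Suc in simp)
    then show ?thesis using Suc.IH[of b] Suc.IH[of b'] Suc by (simp add: add_mult_distrib)
  qed (use Suc.IH in simp)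
  finally show ?case .
qed

lemma count_list_value_lists_le: "vs \<in> value_lists k N \<Longrightarrow> count_list vs x \<le> k"
  using count_le_length[of vs x] by (simp add: value_lists_def)

lemma card_value_lists_count_in:
  "card {vs \<in> value_lists k (Suc n). count_list vs 1 \<in> B} = (\<Sum>b\<in>B \<inter> {0..k}. (k choose b) * n ^ (k - b))"
proof -
  let ?S = "\<lambda>b. {vs \<in> value_lists k (Suc n). count_list vs 1 = b}"
  have "{vs \<in> value_lists k (Suc n). count_list vs 1 \<in> B} = (\<Union>b\<in>B \<inter> {0..k}. ?S b)"
    using count_list_value_lists_le by auto
  then have "card {vs \<in> value_lists k (Suc n). count_list vs 1 \<in> B} = card (\<Union>b\<in>B \<inter> {0..k}. ?S b)"
    by simp
  also have "\<dots> = (\<Sum>b\<in>B \<inter> {0..k}. card (?S b))"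
    by (rule card_UN_disjoint) (auto simp: finite_value_lists)
  finally show ?thesis by (simp only: card_value_lists_count)
qed

lemma card_value_lists_one:
  "card {vs \<in> value_lists k 1. e (count_list vs 1) = 1} = (if e k = 1 then 1 else 0)"
proof -
  have "(\<Sum>b\<in>{b. e b = 1} \<inter> {0..k}. (k choose b) * 0 ^ (k - b)) = (\<Sum>b\<in>{b. e b = 1} \<inter> {k}. 1::nat)"
    by (rule sum.mono_neutral_cong_right) auto
  then show ?thesis using card_value_lists_count_in[of k 0 "{b. e b = 1}"] by (simp add: Int_commute)
qed

lemma real_card_value_lists_F_vec:
  assumes n: "n \<ge> 1" and e: "\<forall>b\<le>k. e b \<in> {0, 1}"
  shows "real (card {vs \<in> value_lists k (Suc n). e (count_list vs 1) = 1}) = real n ^ k * F_vec e k (Suc n)"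
proof -
  have "{b. e b = 1} \<inter> {0..k} = {b \<in> {0..k}. e b = 1}" by auto
  then have "real (card {vs \<in> value_lists k (Suc n). e (count_list vs 1) = 1})
      = (\<Sum>b\<in>{b \<in> {0..k}. e b = 1}. real (k choose b) * real n ^ (k - b))"
    using card_value_lists_count_in[of k n "{b. e b = 1}"]
    by (simp only: mem_Collect_eq of_nat_sum of_nat_mult of_nat_power)
  also have "\<dots> = (\<Sum>b\<in>{0..k}. if e b = 1 then real (k choose b) * real n ^ (k - b) else 0)"
    by (rule sum.inter_filter) simp
  also have "\<dots> = (\<Sum>b=0..k. real n ^ k * (real (k choose b) * real (e b) / real n ^ b))"
  proof (rule sum.cong[OF refl])
    fix b assume b: "b \<in> {0..k}"
    have "real n ^ k = real n ^ (k - b) * real n ^ b" using b by (simp flip: power_add)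
    then show "(if e b = 1 then real (k choose b) * real n ^ (k - b) else 0)
        = real n ^ k * (real (k choose b) * real (e b) / real n ^ b)"
      using e b n by auto
  qed
  finally show ?thesis by (simp add: F_vec_def sum_distrib_left)
qed

lemma compl_vec_eq_1_iff: "c b \<in> {0, 1} \<Longrightarrow> compl_vec c b = 1 \<longleftrightarrow> c b \<noteq> 1"
  by (auto simp: compl_vec_def)

lemma compl_vec_01: "compl_vec c b \<in> {0, 1}"
  by (cases "c b") (auto simp: compl_vec_def)

lemma card_perm_tuples_opt_set_plus:
  "card {qs \<in> perm_tuples k n. card (opt_set c n qs) + d = w} = (if d \<le> w then O_C c k n (w - d) else 0)"
proof (cases "d \<le> w")
  case True
  then have "{qs \<in> perm_tuples k n. card (opt_set c n qs) + d = w}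
      = {qs \<in> perm_tuples k n. card (opt_set c n qs) = w - d}" by auto
  then show ?thesis using True by (simp add: O_C_def)
qed simp

lemma O_C_Suc_card:
  assumes c: "\<forall>\<beta>\<le>k. c \<beta> \<in> {0, 1}"
  shows "O_C c k (Suc n) w =
    card {vs \<in> value_lists k (Suc n). c (count_list vs 1) = 1} * (if 1 \<le> w then O_C c k n (w - 1) else 0)
    + card {vs \<in> value_lists k (Suc n). compl_vec c (count_list vs 1) = 1} * O_C c k n w"
proof -
  let ?P = "perm_tuples k (Suc n)" and ?A = "perm_tuples k n" and ?V = "value_lists k (Suc n)"
  define d :: "nat list \<Rightarrow> nat" where "d vs = (if c (count_list vs 1) = 1 then 1 else 0)" for vs
  define g where "g y = card (opt_set c n (fst y)) + d (snd y)" for y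
  have "O_C c k (Suc n) w = card {ps \<in> ?P. g (split_last n ps) = w}"
    unfolding O_C_def g_def d_def using card_opt_set_Suc by (metis (no_types, lifting))
  also have "\<dots> = card (split_last n ` {ps \<in> ?P. g (split_last n ps) = w})"
    by (rule card_image[symmetric]) (rule inj_on_subset[OF inj_on_split_last], blast)
  also have "split_last n ` {ps \<in> ?P. g (split_last n ps) = w} = {y \<in> split_last n ` ?P. g y = w}"
    by (rule Compr_image_eq[symmetric])
  also have "split_last n ` ?P = ?A \<times> ?V"
    by (rule bij_betw_imp_surj_on[OF bij_betw_split_last])
  also have "card {y \<in> ?A \<times> ?V. g y = w} = (\<Sum>vs\<in>?V. card {qs \<in> ?A. card (opt_set c n qs) + d vs = w})"
    unfolding g_def by (rule card_product_filter[OF finite_perm_tuples finite_value_lists])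
  also have "\<dots> = (\<Sum>vs\<in>?V. if c (count_list vs 1) = 1 then (if 1 \<le> w then O_C c k n (w - 1) else 0)
      else O_C c k n w)"
    by (rule sum.cong[OF refl]) (simp add: card_perm_tuples_opt_set_plus d_def)
  also have "\<dots> = card {vs \<in> ?V. c (count_list vs 1) = 1} * (if 1 \<le> w then O_C c k n (w - 1) else 0)
      + card {vs \<in> ?V. c (count_list vs 1) \<noteq> 1} * O_C c k n w"
    by (simp add: sum.If_cases finite_value_lists Int_def)
  also have "{vs \<in> ?V. c (count_list vs 1) \<noteq> 1} = {vs \<in> ?V. compl_vec c (count_list vs 1) = 1}"
    using c count_list_value_lists_le compl_vec_eq_1_iff by blast
  finally show ?thesis .
qed

lemma O_C_zero: "O_C c k 0 w = (if w = 0 then 1 else 0)"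
proof -
  have "opt_set c 0 ps = {}" for ps by (simp add: opt_set_def)
  then show ?thesis using card_perm_tuples[of k 0] by (simp add: O_C_def)
qed

lemma O_C_one:
  assumes c: "\<forall>\<beta>\<le>k. c \<beta> \<in> {0, 1}"
  shows "O_C c k 1 w = (if w = c k then 1 else 0)"
  using O_C_Suc_card[OF c, of 0 w] c card_value_lists_one[of k c] card_value_lists_one[of k "compl_vec c"]
  by (auto simp: O_C_zero compl_vec_def)

lemma O_C_Suc:
  assumes c: "\<forall>\<beta>\<le>k. c \<beta> \<in> {0, 1}" and n: "n \<ge> 1"
  shows "real (O_C c k (Suc n) w) = real n ^ k *
    (F_vec c k (Suc n) * (if 1 \<le> w then real (O_C c k n (w - 1)) else 0)
     + F_vec (compl_vec c) k (Suc n) * real (O_C c k n w))"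
proof -
  have c': "\<forall>\<beta>\<le>k. compl_vec c \<beta> \<in> {0, 1}" using compl_vec_01 by blast
  show ?thesis
    unfolding O_C_Suc_card[OF c] of_nat_add of_nat_mult
      real_card_value_lists_F_vec[OF n c] real_card_value_lists_F_vec[OF n c']
    by (simp add: algebra_simps)
qed

section \<open>The closed form \<open>O\<^sub>C\<^sub>m\<^sub>a\<^sub>x\<close> as an upper bound\<close>

lemma F_vec_nonneg: "1 \<le> j \<Longrightarrow> 0 \<le> F_vec e k j"
  unfolding F_vec_def by (intro sum_nonneg divide_nonneg_nonneg) auto

lemma F_vec_antimono:
  assumes "2 \<le> i" "i \<le> j"
  shows "F_vec e k j \<le> F_vec e k i"
  unfolding F_vec_def
proof (rule sum_mono)
  fix b
  have "0 < (real i - 1) ^ b" "(real i - 1) ^ b \<le> (real j - 1) ^ b"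
    using assms by (auto intro: power_mono)
  then show "real (k choose b) * real (e b) / (real j - 1) ^ b \<le> real (k choose b) * real (e b) / (real i - 1) ^ b"
    by (intro divide_left_mono) auto
qed

lemma H_vec_nonneg: "0 \<le> H_vec e k n"
  unfolding H_vec_def by (intro sum_nonneg mult_nonneg_nonneg) auto

lemma H_vec_Suc:
  assumes "n \<ge> 1"
  shows "H_vec e k (Suc n) = H_vec e k n + F_vec e k (Suc n)"
proof -
  have "{1..n} = insert n {1..n - 1}" using assms by auto
  then have "(\<Sum>j=1..n. 1 / real j ^ b) = (\<Sum>j=1..n - 1. 1 / real j ^ b) + 1 / real n ^ b" for b
    using assms by simp
  then show ?thesis
    unfolding H_vec_def F_vec_def by (simp add: sum.distrib[symmetric] algebra_simps)
qed

lemma power_add_ge_first_terms: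
  fixes h a :: real
  assumes "0 \<le> h" "0 \<le> a"
  shows "h ^ q + real q * a * h ^ (q - 1) \<le> (h + a) ^ q"
proof (induction q)
  case (Suc q)
  have "h ^ Suc q + real (Suc q) * a * h ^ q \<le> (h ^ q + real q * a * h ^ (q - 1)) * (h + a)"
  proof (cases q)
    case (Suc q')
    have "0 \<le> real q * a * a * h ^ q'" using assms by simp
    then show ?thesis using Suc by (simp add: algebra_simps)
  qed simp
  also have "\<dots> \<le> (h + a) ^ q * (h + a)"
    using Suc assms by (intro mult_right_mono) auto
  finally show ?case by (simp add: mult.commute)
qed simp

definition compl_F_prod :: "(nat \<Rightarrow> nat) \<Rightarrow> nat \<Rightarrow> nat \<Rightarrow> real" where
  "compl_F_prod c k r = (\<Prod>i=1..r. F_vec (compl_vec c) k (i + 1))"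

lemma compl_F_prod_nonneg: "0 \<le> compl_F_prod c k r"
  unfolding compl_F_prod_def by (intro prod_nonneg) (auto intro: F_vec_nonneg)

lemma compl_F_prod_Suc: "compl_F_prod c k (Suc r) = compl_F_prod c k r * F_vec (compl_vec c) k (r + 2)"
  unfolding compl_F_prod_def by (simp add: prod.cl_ivl_Suc)

text \<open>\<open>Omax_coeff c k n m\<close> is \<open>O\<^sub>C\<^sub>m\<^sub>a\<^sub>x(n, m + c\<^sub>k - 1) / (n - 1)!\<^sup>k\<close>, indexed by the \<open>m\<close> of the formula.\<close>

definition Omax_coeff :: "(nat \<Rightarrow> nat) \<Rightarrow> nat \<Rightarrow> nat \<Rightarrow> nat \<Rightarrow> real" where
  "Omax_coeff c k n m =
     (if 1 \<le> m \<and> m \<le> n then H_vec c k n ^ (m - 1) / fact (m - 1) * compl_F_prod c k (n - m) else 0)"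

lemma Omax_eq_Omax_coeff:
  assumes "c k \<le> 1"
  shows "Omax c k n (int w) = fact (n - 1) ^ k * Omax_coeff c k n (w + 1 - c k)"
proof -
  have "int w + 1 - int (c k) = int (w + 1 - c k)" using assms by simp
  then show ?thesis
    unfolding Omax_def Let_def by (simp only: nat_int) (simp add: Omax_coeff_def compl_F_prod_def)
qed

lemma Omax_coeff_Suc_ge:
  assumes n: "n \<ge> 1"
  shows "F_vec c k (Suc n) * Omax_coeff c k n (m - 1) + F_vec (compl_vec c) k (Suc n) * Omax_coeff c k n m
    \<le> Omax_coeff c k (Suc n) m"
proof (cases "1 \<le> m \<and> m \<le> Suc n")
  case False
  then have "m = 0 \<or> (m - 1 > n \<and> m > n)" by auto
  then show ?thesis by (auto simp: Omax_coeff_def)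
next
  case True
  define q where "q = m - 1"
  define H where "H = H_vec c k n"
  define A where "A = F_vec c k (Suc n)"
  define B where "B = F_vec (compl_vec c) k (Suc n)"
  define P where "P = compl_F_prod c k (Suc n - m)"
  have m: "m = Suc q" and q: "q \<le> n" using True by (auto simp: q_def)
  have A0: "0 \<le> A" and H0: "0 \<le> H" and P0: "0 \<le> P"
    using F_vec_nonneg H_vec_nonneg compl_F_prod_nonneg by (auto simp: A_def H_def P_def)
  have rhs: "Omax_coeff c k (Suc n) m = (H + A) ^ q / fact q * P"
    using True n by (simp add: Omax_coeff_def H_vec_Suc H_def A_def P_def q_def)
  have first: "A * Omax_coeff c k n (m - 1) \<le> real q * A * H ^ (q - 1) / fact q * P"
  proof (cases q)
    case (Suc q')
    have "fact q = real q * fact q'" using Suc by simp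
    then show ?thesis using Suc m q by (simp add: Omax_coeff_def H_def P_def)
  qed (simp add: Omax_coeff_def m)
  have second: "B * Omax_coeff c k n m \<le> H ^ q / fact q * P"
  proof (cases "m \<le> n")
    case True
    then have split: "Suc n - m = Suc (n - m)" by simp
    have "B \<le> F_vec (compl_vec c) k (n - m + 2)"
      unfolding B_def by (intro F_vec_antimono) (use True m in auto)
    then have "compl_F_prod c k (n - m) * B \<le> P"
      unfolding P_def split compl_F_prod_Suc by (intro mult_left_mono compl_F_prod_nonneg)
    then have "H ^ q / fact q * (compl_F_prod c k (n - m) * B) \<le> H ^ q / fact q * P"
      using H0 by (intro mult_left_mono) auto
    moreover have "B * Omax_coeff c k n m = H ^ q / fact q * (compl_F_prod c k (n - m) * B)"
      using True m by (simp add: Omax_coeff_def H_def mult_ac)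
    ultimately show ?thesis by simp
  qed (use H0 P0 in \<open>simp add: Omax_coeff_def\<close>)
  have "A * Omax_coeff c k n (m - 1) + B * Omax_coeff c k n m \<le> (H ^ q + real q * A * H ^ (q - 1)) / fact q * P"
    using first second by (simp add: add_divide_distrib distrib_right)
  also have "\<dots> \<le> (H + A) ^ q / fact q * P"
    using power_add_ge_first_terms[OF H0 A0, of q] P0 by (intro mult_right_mono divide_right_mono) auto
  finally show ?thesis unfolding rhs A_def B_def .
qed

lemma Omax_Suc_ge:
  assumes c: "\<forall>\<beta>\<le>k. c \<beta> \<in> {0, 1}" and n: "n \<ge> 1"
  shows "real n ^ k * (F_vec c k (Suc n) * (if 1 \<le> w then Omax c k n (int (w - 1)) else 0)
      + F_vec (compl_vec c) k (Suc n) * Omax c k n (int w)) \<le> Omax c k (Suc n) (int w)"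
proof -
  define M where "M = w + 1 - c k"
  have ck: "c k \<le> 1" using c by auto
  have pred: "(if 1 \<le> w then Omax c k n (int (w - 1)) else 0) = fact (n - 1) ^ k * Omax_coeff c k n (M - 1)"
  proof (cases "1 \<le> w")
    case True
    then have "w - 1 + 1 - c k = M - 1" by (simp add: M_def)
    then show ?thesis using True Omax_eq_Omax_coeff[of c k n "w - 1", OF ck] by simp
  next
    case False
    then have "M - 1 = 0" by (simp add: M_def)
    then show ?thesis using False by (simp add: Omax_coeff_def)
  qed
  have "(fact n :: real) = real n * fact (n - 1)" using n by (simp add: fact_reduce)
  then have fact_Suc: "(fact n :: real) ^ k = real n ^ k * fact (n - 1) ^ k"
    by (simp add: power_mult_distrib)
  have cur: "Omax c k n (int w) = fact (n - 1) ^ k * Omax_coeff c k n M"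
    unfolding M_def by (rule Omax_eq_Omax_coeff[of c k, OF ck])
  have succ: "Omax c k (Suc n) (int w) = fact n ^ k * Omax_coeff c k (Suc n) M"
    unfolding M_def using Omax_eq_Omax_coeff[of c k "Suc n" w, OF ck] by simp
  have "real n ^ k * (F_vec c k (Suc n) * (if 1 \<le> w then Omax c k n (int (w - 1)) else 0)
      + F_vec (compl_vec c) k (Suc n) * Omax c k n (int w))
      = real n ^ k * fact (n - 1) ^ k * (F_vec c k (Suc n) * Omax_coeff c k n (M - 1)
        + F_vec (compl_vec c) k (Suc n) * Omax_coeff c k n M)"
    unfolding pred cur by (simp add: algebra_simps)
  also have "\<dots> \<le> real n ^ k * fact (n - 1) ^ k * Omax_coeff c k (Suc n) M"
    by (intro mult_left_mono Omax_coeff_Suc_ge n) auto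
  also have "\<dots> = Omax c k (Suc n) (int w)"
    unfolding succ fact_Suc ..
  finally show ?thesis .
qed

lemma O_C_le_Omax:
  assumes c: "\<forall>\<beta>\<le>k. c \<beta> \<in> {0, 1}" and n: "n \<ge> 1"
  shows "real (O_C c k n w) \<le> Omax c k n (int w)"
  using n
proof (induction n arbitrary: w rule: nat_induct_at_least)
  case base
  have "c k \<le> 1" using c by auto
  then show ?case
    using O_C_one[OF c, of w] H_vec_nonneg[of c k 1]
    by (simp add: Omax_eq_Omax_coeff Omax_coeff_def compl_F_prod_def)
next
  case (Suc n)
  have F0: "0 \<le> F_vec c k (Suc n)" "0 \<le> F_vec (compl_vec c) k (Suc n)" by (auto intro: F_vec_nonneg)
  have "F_vec c k (Suc n) * (if 1 \<le> w then real (O_C c k n (w - 1)) else 0)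
      + F_vec (compl_vec c) k (Suc n) * real (O_C c k n w)
    \<le> F_vec c k (Suc n) * (if 1 \<le> w then Omax c k n (int (w - 1)) else 0)
      + F_vec (compl_vec c) k (Suc n) * Omax c k n (int w)"
  proof -
    have "(if 1 \<le> w then real (O_C c k n (w - 1)) else 0) \<le> (if 1 \<le> w then Omax c k n (int (w - 1)) else 0)"
      using Suc.IH[of "w - 1"] by (cases "1 \<le> w") (simp_all only: if_True if_False order.refl)
    then show ?thesis using F0 by (intro add_mono mult_left_mono Suc.IH)
  qed
  then have "real (O_C c k (Suc n) w) \<le> real n ^ k * (F_vec c k (Suc n) * (if 1 \<le> w then Omax c k n (int (w - 1)) else 0)
      + F_vec (compl_vec c) k (Suc n) * Omax c k n (int w))"
    unfolding O_C_Suc[OF c Suc.hyps] by (intro mult_left_mono) auto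
  also have "\<dots> \<le> Omax c k (Suc n) (int w)" by (rule Omax_Suc_ge[OF c Suc.hyps])
  finally show ?case .
qed

section \<open>Complementary sets and sums over all weights\<close>

lemma rec_count_le: "ps \<in> perm_tuples k n \<Longrightarrow> rec_count ps a \<le> k"
  using length_filter_le[of "\<lambda>p. is_record p a" ps] by (simp add: rec_count_def perm_tuples_def)

lemma card_opt_set_le: "card (opt_set c n ps) \<le> n"
proof -
  have "opt_set c n ps \<subseteq> {1..n}" by (auto simp: opt_set_def)
  from card_mono[OF finite_atLeastAtMost this] show ?thesis by simp
qed

lemma opt_set_compl_vec:
  assumes c: "\<forall>\<beta>\<le>k. c \<beta> \<in> {0, 1}" and ps: "ps \<in> perm_tuples k n"
  shows "opt_set (compl_vec c) n ps = {1..n} - opt_set c n ps"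
  using compl_vec_eq_1_iff c rec_count_le[OF ps] by (auto simp: opt_set_def)

lemma O_C_compl_vec:
  assumes c: "\<forall>\<beta>\<le>k. c \<beta> \<in> {0, 1}" and m: "m \<le> n"
  shows "O_C c k n m = O_C (compl_vec c) k n (n - m)"
proof -
  have "card (opt_set c n ps) = m \<longleftrightarrow> card (opt_set (compl_vec c) n ps) = n - m"
    if ps: "ps \<in> perm_tuples k n" for ps
  proof -
    have sub: "opt_set c n ps \<subseteq> {1..n}" by (auto simp: opt_set_def)
    then have "card (opt_set (compl_vec c) n ps) = n - card (opt_set c n ps)"
      using card_Diff_subset[OF finite_subset[OF sub] sub] opt_set_compl_vec[OF c ps] by simp
    then show ?thesis using m card_opt_set_le[of c n ps] by auto
  qed
  then show ?thesis unfolding O_C_def by (metis (no_types, lifting) Collect_cong)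
qed

lemma O_C_le_Omax_compl_vec:
  assumes c: "\<forall>\<beta>\<le>k. c \<beta> \<in> {0, 1}" and n: "n \<ge> 1" and m: "m \<le> n"
  shows "real (O_C c k n m) \<le> Omax (compl_vec c) k n (int n - int m)"
proof -
  have c': "\<forall>\<beta>\<le>k. compl_vec c \<beta> \<in> {0, 1}" using compl_vec_01 by blast
  have "real (O_C c k n m) = real (O_C (compl_vec c) k n (n - m))"
    using O_C_compl_vec[OF c m] by simp
  also have "\<dots> \<le> Omax (compl_vec c) k n (int (n - m))"
    by (rule O_C_le_Omax[OF c' n])
  finally show ?thesis using m by (simp add: of_nat_diff)
qed

lemma sum_O_C: "(\<Sum>m=0..n. real (O_C c k n m)) = fact n ^ k"
proof -
  let ?S = "\<lambda>m. {ps \<in> perm_tuples k n. card (opt_set c n ps) = m}"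
  have "perm_tuples k n = (\<Union>m\<in>{0..n}. ?S m)"
    using card_opt_set_le by auto
  then have "card (perm_tuples k n) = card (\<Union>m\<in>{0..n}. ?S m)" by simp
  also have "\<dots> = (\<Sum>m=0..n. O_C c k n m)"
    unfolding O_C_def by (rule card_UN_disjoint) (auto simp: finite_perm_tuples)
  finally show ?thesis by (metis card_perm_tuples of_nat_fact of_nat_power of_nat_sum)
qed

lemma sum_Omax:
  assumes "c k \<le> 1"
  shows "(\<Sum>m=0..n. Omax c k n (int m)) = fact (n - 1) ^ k * (\<Sum>m=1..n. Omax_coeff c k n m)"
proof -
  have shift: "(\<Sum>m=0..n. Omax_coeff c k n (m + 1 - c k)) = (\<Sum>m=1..n. Omax_coeff c k n m)"
  proof (cases "c k = 0")
    case True
    have "(\<Sum>m=0..n. Omax_coeff c k n (m + 1 - c k)) = (\<Sum>m=0..n. Omax_coeff c k n (Suc m))"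
      using True by simp
    also have "\<dots> = (\<Sum>m=Suc 0..Suc n. Omax_coeff c k n m)"
      by (rule sum.shift_bounds_cl_Suc_ivl[symmetric])
    also have "\<dots> = (\<Sum>m=1..n. Omax_coeff c k n m)" by (simp add: Omax_coeff_def)
    finally show ?thesis .
  next
    case False
    then have "c k = 1" using assms by simp
    then show ?thesis by (simp add: sum.atLeast_Suc_atMost Omax_coeff_def)
  qed
  have "(\<Sum>m=0..n. Omax c k n (int m)) = (\<Sum>m=0..n. fact (n - 1) ^ k * Omax_coeff c k n (m + 1 - c k))"
    by (intro sum.cong refl Omax_eq_Omax_coeff[of c k, OF assms])
  also have "\<dots> = fact (n - 1) ^ k * (\<Sum>m=0..n. Omax_coeff c k n (m + 1 - c k))"
    by (rule sum_distrib_left[symmetric])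
  finally show ?thesis unfolding shift .
qed

lemma F_vec_compl_vec_le:
  assumes "j \<ge> 2"
  shows "F_vec (compl_vec c) k j \<le> (1 + 1 / (real j - 1)) ^ k"
proof -
  have "F_vec (compl_vec c) k j \<le> (\<Sum>b\<le>k. real (k choose b) * (1 / (real j - 1)) ^ b * 1 ^ (k - b))"
    unfolding F_vec_def atLeast0AtMost[symmetric]
  proof (rule sum_mono)
    fix b
    have "real (compl_vec c b) \<le> 1" using compl_vec_01[of c b] by auto
    then have "real (k choose b) * real (compl_vec c b) / (real j - 1) ^ b \<le> real (k choose b) / (real j - 1) ^ b"
      using assms by (intro divide_right_mono) (auto simp: mult_left_le)
    then show "real (k choose b) * real (compl_vec c b) / (real j - 1) ^ b
        \<le> real (k choose b) * (1 / (real j - 1)) ^ b * 1 ^ (k - b)"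
      by (simp add: power_divide)
  qed
  also have "\<dots> = (1 / (real j - 1) + 1) ^ k"
    by (rule binomial_ring[symmetric])
  finally show ?thesis by (simp add: add.commute)
qed

lemma compl_F_prod_le: "compl_F_prod c k r \<le> (real r + 1) ^ k"
proof (induction r)
  case (Suc r)
  have "compl_F_prod c k (Suc r) \<le> (real r + 1) ^ k * (1 + 1 / (real r + 1)) ^ k"
    unfolding compl_F_prod_Suc
    using Suc compl_F_prod_nonneg F_vec_nonneg F_vec_compl_vec_le[of "r + 2" c k]
    by (intro mult_mono) (auto simp: add.commute)
  also have "\<dots> = (real (Suc r) + 1) ^ k"
  proof -
    have "(real r + 1) * (1 + 1 / (real r + 1)) = real (Suc r) + 1" by (simp add: field_simps)
    then show ?thesis by (simp only: power_mult_distrib[symmetric])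
  qed
  finally show ?case .
qed (simp add: compl_F_prod_def)

lemma Omax_coeff_Suc_le:
  assumes p: "p < n"
  shows "Omax_coeff c k n (Suc p) \<le> H_vec c k n ^ p / fact p * (real n - real p) ^ k"
proof -
  have "real (n - Suc p) + 1 = real n - real p" using p by (simp add: of_nat_diff)
  then have prod_le: "compl_F_prod c k (n - Suc p) \<le> (real n - real p) ^ k"
    using compl_F_prod_le[of c k "n - Suc p"] by simp
  have "Omax_coeff c k n (Suc p) = H_vec c k n ^ p / fact p * compl_F_prod c k (n - Suc p)"
    using p by (simp add: Omax_coeff_def)
  also have "\<dots> \<le> H_vec c k n ^ p / fact p * (real n - real p) ^ k"
    by (rule mult_left_mono[OF prod_le]) (simp add: H_vec_nonneg)
  finally show ?thesis .
qed

lemma Omax_ratio_le_series: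
  assumes ck: "c k \<le> 1" and n: "n \<ge> 1"
  shows "(\<Sum>m=0..n. Omax c k n (int m)) / (\<Sum>m=0..n. real (O_C e k n m))
    \<le> (\<Sum>p<n. H_vec c k n ^ p / fact p * (1 - real p / real n) ^ k)"
proof -
  have "(fact n :: real) = real n * fact (n - 1)" using n by (simp add: fact_reduce)
  then have "(\<Sum>m=0..n. Omax c k n (int m)) / (\<Sum>m=0..n. real (O_C e k n m))
      = (\<Sum>m=1..n. Omax_coeff c k n m / real n ^ k)"
    using n by (simp add: sum_Omax[of c k, OF ck] sum_O_C power_mult_distrib sum_divide_distrib)
  also have "\<dots> = (\<Sum>p<n. Omax_coeff c k n (Suc p) / real n ^ k)"
    using sum.atLeast1_atMost_eq[of "\<lambda>m. Omax_coeff c k n m / real n ^ k" n] by simp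
  also have "\<dots> \<le> (\<Sum>p<n. H_vec c k n ^ p / fact p * (1 - real p / real n) ^ k)"
  proof (rule sum_mono)
    fix p assume "p \<in> {..<n}"
    then have "Omax_coeff c k n (Suc p) / real n ^ k \<le> H_vec c k n ^ p / fact p * (real n - real p) ^ k / real n ^ k"
      by (intro divide_right_mono Omax_coeff_Suc_le) auto
    also have "\<dots> = H_vec c k n ^ p / fact p * ((real n - real p) / real n) ^ k"
      by (simp add: power_divide)
    also have "(real n - real p) / real n = 1 - real p / real n"
      using n by (simp add: diff_divide_distrib)
    finally show "Omax_coeff c k n (Suc p) / real n ^ k \<le> H_vec c k n ^ p / fact p * (1 - real p / real n) ^ k" .
  qed
  finally show ?thesis .
qed

section \<open>Analytic estimates\<close>

lemma exp_partial_sum_le: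
  fixes x :: real
  assumes "0 \<le> x"
  shows "(\<Sum>p<n. x ^ p / fact p) \<le> exp x"
  using assms summable_exp_generic[of x]
  by (auto simp: exp_def divide_inverse ac_simps intro!: sum_le_suminf)

lemma truncated_exp_series_le:
  fixes h :: real
  assumes h: "0 \<le> h" and n: "n \<ge> 1"
  shows "(\<Sum>p<n. h ^ p / fact p * (1 - real p / real n) ^ k) \<le> exp (h * exp (- real k / real n))"
proof -
  have "(\<Sum>p<n. h ^ p / fact p * (1 - real p / real n) ^ k) \<le> (\<Sum>p<n. (h * exp (- real k / real n)) ^ p / fact p)"
  proof (rule sum_mono)
    fix p assume "p \<in> {..<n}"
    then have "0 \<le> 1 - real p / real n" by simp
    then have "(1 - real p / real n) ^ k \<le> exp (- real p / real n) ^ k"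
      using exp_ge_add_one_self[of "- real p / real n"] by (intro power_mono) auto
    also have "\<dots> = exp (real k * (- real p / real n))" by (rule exp_of_nat_mult[symmetric])
    also have "\<dots> = exp (real p * (- real k / real n))" by simp
    also have "\<dots> = exp (- real k / real n) ^ p" by (rule exp_of_nat_mult)
    finally have "h ^ p / fact p * (1 - real p / real n) ^ k \<le> h ^ p / fact p * exp (- real k / real n) ^ p"
      using h by (intro mult_left_mono) auto
    then show "h ^ p / fact p * (1 - real p / real n) ^ k \<le> (h * exp (- real k / real n)) ^ p / fact p"
      by (simp add: power_mult_distrib)
  qed
  also have "\<dots> \<le> exp (h * exp (- real k / real n))"
    using h by (intro exp_partial_sum_le) simp
  finally show ?thesis .
qed

lemma sum_inverse_power_le_pi_sq:
  assumes b: "2 \<le> b"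
  shows "(\<Sum>j=1..N. 1 / real j ^ b) \<le> pi\<^sup>2 / 6"
proof -
  have "(\<Sum>j=1..N. 1 / real j ^ b) \<le> (\<Sum>j=1..N. 1 / real j ^ 2)"
  proof (rule sum_mono)
    fix j assume "j \<in> {1..N}"
    then have "real j ^ 2 \<le> real j ^ b" "0 < real j ^ 2" using b by (auto intro: power_increasing)
    then show "1 / real j ^ b \<le> 1 / real j ^ 2" by (intro divide_left_mono) auto
  qed
  also have "\<dots> = (\<Sum>i<N. 1 / real ((i + 1) ^ 2))"
    using sum.atLeast1_atMost_eq[of "\<lambda>j. 1 / real j ^ 2" N] by simp
  also have "\<dots> \<le> (\<Sum>i. 1 / real ((i + 1) ^ 2))"
    by (rule sum_le_suminf[OF sums_summable[OF inverse_squares_sums]]) auto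
  also have "\<dots> = pi\<^sup>2 / 6" using sums_unique[OF inverse_squares_sums] by simp
  finally show ?thesis .
qed

lemma H_vec_eq:
  assumes k: "k \<ge> 1" and n: "n \<ge> 1"
  shows "H_vec c k n = real (c 0) * (real n - 1) + real (c 1) * real k * harm (n - 1)
    + (\<Sum>\<beta>=2..k. real (c \<beta>) * real (k choose \<beta>) * (\<Sum>j=1..n-1. 1 / real j ^ \<beta>))"
proof -
  define f where "f \<beta> = real (c \<beta>) * real (k choose \<beta>) * (\<Sum>j=1..n-1. 1 / real j ^ \<beta>)" for \<beta>
  have "H_vec c k n = sum f {0..k}" by (simp add: H_vec_def f_def)
  also have "\<dots> = f 0 + (f 1 + sum f {2..k})"
    using k by (simp add: sum.atLeast_Suc_atMost numeral_2_eq_2)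
  also have "f 0 = real (c 0) * (real n - 1)" using n by (simp add: f_def of_nat_diff)
  also have "f 1 = real (c 1) * real k * harm (n - 1)"
    by (simp add: f_def harm_def inverse_eq_divide)
  finally show ?thesis by (simp add: f_def add.assoc)
qed

lemma weighted_inverse_power_sums_le:
  "(\<Sum>\<beta>=2..k. real (c \<beta>) * real (k choose \<beta>) * (\<Sum>j=1..N. 1 / real j ^ \<beta>))
    \<le> pi\<^sup>2 / 6 * (\<Sum>\<beta>=2..k. real (c \<beta>) * real (k choose \<beta>))"
proof -
  have "(\<Sum>\<beta>=2..k. real (c \<beta>) * real (k choose \<beta>) * (\<Sum>j=1..N. 1 / real j ^ \<beta>))
      \<le> (\<Sum>\<beta>=2..k. real (c \<beta>) * real (k choose \<beta>) * (pi\<^sup>2 / 6))"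
    by (intro sum_mono mult_left_mono sum_inverse_power_le_pi_sq) auto
  then show ?thesis by (simp add: sum_distrib_left mult.commute)
qed

lemma harm_mult_exp_le:
  assumes n: "n \<ge> 3"
  shows "harm (n - 1) * exp (- 1 / real n) \<le> ln (real n - 1) + euler_mascheroni"
proof -
  define N where "N = n - 1"
  define G where "G = ln (real N) + euler_mascheroni"
  have N: "N \<ge> 2" "real n = real N + 1" using n by (auto simp: N_def)
  have "ln (2::real) \<le> ln (real N)" using N by simp
  then have G1: "1 \<le> G" using ln2_ge_two_thirds euler_mascheroni_gt_19_over_33 by (simp add: G_def)
  have upper: "harm N \<le> euler_mascheroni + ln (real N + 1) - 1 / (2 * (real N + 1))"
    using euler_mascheroni_lower[of "N - 1"] N by (simp add: add.commute)
  have ln_step: "ln (real N + 1) - ln (real N) < 1 / real N" using N by (intro ln_diff_le_inverse) simp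
  have "1 / real N - 1 / (2 * (real N + 1)) \<le> 1 / (real N + 1)"
  proof -
    have half: "3 / (2 * y) - 1 / (2 * y) = 1 / y" for y :: real
      by (cases "y = 0") (simp_all add: field_simps)
    have "1 / real N \<le> 3 / (2 * (real N + 1))"
      using N by (simp add: le_divide_eq divide_le_eq)
    then have "1 / real N - 1 / (2 * (real N + 1)) \<le> 3 / (2 * (real N + 1)) - 1 / (2 * (real N + 1))"
      by (rule diff_right_mono)
    also note half[of "real N + 1"]
    finally show ?thesis .
  qed
  moreover have "1 / (real N + 1) \<le> G / (real N + 1)" using G1 by (simp add: divide_right_mono)
  ultimately have "harm N \<le> G + G / (real N + 1)"
    using upper ln_step unfolding G_def by linarith
  also have "\<dots> = G * (1 + 1 / real n)" unfolding N(2) by (simp add: distrib_left)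
  also have "\<dots> \<le> G * exp (1 / real n)" using G1 by (intro mult_left_mono) auto
  finally have "harm N * exp (- 1 / real n) \<le> G * exp (1 / real n) * exp (- 1 / real n)"
    by (intro mult_right_mono) auto
  also have "\<dots> = G" by (simp add: mult.assoc flip: exp_add)
  finally have "harm N * exp (- 1 / real n) \<le> G" .
  moreover have "real n - 1 = real N" using N by simp
  ultimately show ?thesis unfolding N_def[symmetric] G_def by simp
qed

lemma Omax_ratio_le_exp_H_vec:
  assumes ck: "c k \<le> 1" and n: "n \<ge> 1"
  shows "(\<Sum>m=0..n. Omax c k n (int m)) / (\<Sum>m=0..n. real (O_C e k n m))
    \<le> exp (H_vec c k n * exp (- real k / real n))"
  by (rule order.trans[OF Omax_ratio_le_series[of c k n e, OF ck n] truncated_exp_series_le[OF H_vec_nonneg n]])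

lemma Omax_ratio_two_le:
  assumes ck: "c k \<le> 1" and k: "k \<ge> 1"
  shows "(\<Sum>m=0..2. Omax c k 2 (int m)) / (\<Sum>m=0..2. real (O_C e k 2 m)) \<le> 1 + H_vec c k 2 / 2"
proof -
  have "(1 / 2 :: real) ^ k \<le> (1 / 2) ^ 1" by (rule power_decreasing[OF k]) simp_all
  then have "H_vec c k 2 * (1 / 2) ^ k \<le> H_vec c k 2 * (1 / 2) ^ 1"
    by (rule mult_left_mono) (simp add: H_vec_nonneg)
  then show ?thesis
    using Omax_ratio_le_series[of c k 2 e, OF ck] by (simp add: numeral_2_eq_2)
qed

lemma Omax_ratio_le_exp:
  assumes c: "\<forall>\<beta>\<le>k. c \<beta> \<in> {0, 1}" and k: "k \<ge> 1" and n: "n \<ge> 2"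
  shows "(\<Sum>m=0..n. Omax c k n (int m)) / (\<Sum>m=0..n. real (O_C e k n m))
    \<le> exp (real (c 0) * (real n - 1) + real (c 1) * real k * (ln (real n - 1) + euler_mascheroni)
         + pi\<^sup>2 / 6 * (\<Sum>\<beta>=2..k. real (c \<beta>) * real (k choose \<beta>)))"
    (is "_ \<le> exp ?lam")
proof -
  define A where "A = real (c 0) * (real n - 1)
    + (\<Sum>\<beta>=2..k. real (c \<beta>) * real (k choose \<beta>) * (\<Sum>j=1..n-1. 1 / real j ^ \<beta>))"
  define Z where "Z = pi\<^sup>2 / 6 * (\<Sum>\<beta>=2..k. real (c \<beta>) * real (k choose \<beta>))"
  have ck: "c k \<le> 1" using c by auto
  have H: "H_vec c k n = A + real (c 1) * real k * harm (n - 1)"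
    using H_vec_eq[OF k, of n c] n by (simp add: A_def)
  have A0: "0 \<le> A" unfolding A_def using n by (intro add_nonneg_nonneg mult_nonneg_nonneg sum_nonneg) auto
  have AZ: "A \<le> real (c 0) * (real n - 1) + Z"
    unfolding A_def Z_def using weighted_inverse_power_sums_le by simp
  show ?thesis
  proof (cases "n = 2")
    case True
    have "real (c 1) * real k * (1 / 2) \<le> real (c 1) * real k * euler_mascheroni"
      using euler_mascheroni_gt_19_over_33 by (intro mult_left_mono) simp_all
    then have half: "H_vec c k n / 2 \<le> ?lam"
      using True H A0 AZ by (simp add: Z_def harm_expand)
    have "(\<Sum>m=0..n. Omax c k n (int m)) / (\<Sum>m=0..n. real (O_C e k n m)) \<le> 1 + H_vec c k n / 2"
      using Omax_ratio_two_le[of c k e, OF ck k] True by simp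
    also have "\<dots> \<le> 1 + ?lam" using half by simp
    also have "\<dots> \<le> exp ?lam" by (rule exp_ge_add_one_self)
    finally show ?thesis .
  next
    case False
    then have n3: "n \<ge> 3" using n by simp
    define \<epsilon> where "\<epsilon> = exp (- real k / real n)"
    have \<epsilon>: "\<epsilon> \<le> exp (- 1 / real n)" "exp (- 1 / real n) \<le> 1"
      using k n by (auto simp: \<epsilon>_def divide_right_mono)
    have "A * \<epsilon> \<le> A" by (rule mult_left_le[OF order.trans[OF \<epsilon>] A0])
    moreover have "harm (n - 1) * \<epsilon> \<le> ln (real n - 1) + euler_mascheroni"
      using mult_left_mono[OF \<epsilon>(1) harm_nonneg] harm_mult_exp_le[OF n3] by (rule order.trans)
    then have "real (c 1) * real k * (harm (n - 1) * \<epsilon>)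
        \<le> real (c 1) * real k * (ln (real n - 1) + euler_mascheroni)"
      by (intro mult_left_mono) simp_all
    moreover have "H_vec c k n * \<epsilon> = A * \<epsilon> + real (c 1) * real k * (harm (n - 1) * \<epsilon>)"
      unfolding H by (simp add: algebra_simps)
    ultimately have "H_vec c k n * \<epsilon> \<le> ?lam" using AZ unfolding Z_def by linarith
    then show ?thesis
      using Omax_ratio_le_exp_H_vec[of c k n e, OF ck] n by (simp add: \<epsilon>_def order.trans)
  qed
qed

section \<open>Stirling numbers of the first kind\<close>

lemma sum_su_max:
  assumes n: "n \<ge> 1"
  shows "(\<Sum>m=0..n. su_max n m) = fact (n - 1) * (\<Sum>p<n. harm (n - 1) ^ p / fact p)"
proof -
  have "(\<Sum>m=0..n. su_max n m) = (\<Sum>m=Suc 0..n. su_max n m)"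
    by (simp add: sum.atLeast_Suc_atMost su_max_def)
  also have "\<dots> = (\<Sum>p<n. su_max n (Suc p))" by (rule sum.atLeast1_atMost_eq)
  also have "\<dots> = (\<Sum>p<n. fact (n - 1) * (harm (n - 1) ^ p / fact p))"
    by (rule sum.cong) (auto simp: su_max_def harm_def inverse_eq_divide)
  finally show ?thesis by (simp add: sum_distrib_left)
qed

lemma sum_stirling_real: "(\<Sum>m=0..n. real (stirling n m)) = fact n"
  using sum_stirling[of n] by (simp add: atLeast0AtMost flip: of_nat_sum)

lemma sum_inverse_pred_eq_harm: "(\<Sum>j=2..n. 1 / (real j - 1)) = harm (n - 1)"
proof (cases n)
  case (Suc n')
  have "(\<Sum>j=Suc (Suc 0)..Suc n'. 1 / (real j - 1)) = (\<Sum>i=Suc 0..n'. 1 / (real (Suc i) - 1))"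
    by (rule sum.shift_bounds_cl_Suc_ivl)
  then show ?thesis using Suc by (simp add: numeral_2_eq_2 harm_def inverse_eq_divide)
qed (simp add: harm_def)

lemma stirling_max_ratio_le:
  assumes n: "n \<ge> 2"
  shows "(\<Sum>m=0..n. su_max n m) / (\<Sum>m=0..n. real (stirling n m))
      \<le> (real n - 1) / real n * exp ((\<Sum>j=2..n. 1 / (real j - 1)) - ln (real n - 1))
    \<and> (real n - 1) / real n * exp ((\<Sum>j=2..n. 1 / (real j - 1)) - ln (real n - 1)) \<le> exp euler_mascheroni"
proof -
  define L where "L = (harm (n - 1) :: real)"
  have "(fact n :: real) = real n * fact (n - 1)" using n by (simp add: fact_reduce)
  then have "(\<Sum>m=0..n. su_max n m) / (\<Sum>m=0..n. real (stirling n m)) = (\<Sum>p<n. L ^ p / fact p) / real n"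
    using n by (simp add: sum_su_max sum_stirling_real L_def)
  also have "\<dots> \<le> exp L / real n"
    by (intro divide_right_mono exp_partial_sum_le) (simp_all add: L_def harm_nonneg)
  also have "exp L / real n = (real n - 1) / real n * exp ((\<Sum>j=2..n. 1 / (real j - 1)) - ln (real n - 1))"
    using n by (simp add: sum_inverse_pred_eq_harm L_def exp_diff)
  finally have ratio: "(\<Sum>m=0..n. su_max n m) / (\<Sum>m=0..n. real (stirling n m))
      \<le> (real n - 1) / real n * exp ((\<Sum>j=2..n. 1 / (real j - 1)) - ln (real n - 1))" .
  have "harm (n - 1) - ln (real n) + 1 / (2 * real n) \<le> (euler_mascheroni :: real)"
    using euler_mascheroni_lower[of "n - 2"] n by (simp add: Suc_diff_Suc numeral_2_eq_2)
  moreover have "0 \<le> 1 / (2 * real n)" by simp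
  ultimately have "L \<le> euler_mascheroni + ln (real n)" unfolding L_def by linarith
  then have "exp L \<le> exp (euler_mascheroni + ln (real n))" by simp
  also have "\<dots> = exp euler_mascheroni * real n" using n by (simp add: exp_add)
  finally have "exp L / real n \<le> exp euler_mascheroni" using n by (simp add: divide_le_eq)
  then show ?thesis
    using ratio n by (simp add: sum_inverse_pred_eq_harm L_def exp_diff)
qed

lemma ln_2_ge: "0.69314718 \<le> ln (2::real)"
  using ln_approx_bounds[of 2 9] by (simp add: eval_nat_numeral)

lemma ln_17811_ge: "0.57723 \<le> ln (1.7811::real)"
  using ln_approx_bounds[of "1.7811" 5] by (simp add: eval_nat_numeral)

text \<open>\<open>ln 1.7811\<close> exceeds the Euler--Mascheroni constant by less than \<open>0.00002\<close>, hence the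
  bound via the 255-th harmonic number.\<close>

lemma exp_euler_mascheroni_le: "exp (euler_mascheroni :: real) \<le> 1.7811"
proof -
  have harm_255: "harm 255 \<le> (6.12044::real)" by (simp add: harm_expand)
  have "ln ((2::real) ^ 8) = real (8::nat) * ln 2" by (rule ln_realpow)
  then have ln_256: "ln (real (254 + 2 :: nat)) = 8 * ln (2::real)" by simp
  have "(euler_mascheroni::real) \<le> harm (Suc 254) - ln (real (254 + 2)) + 1 / real (2 * (254 + 1))"
    by (rule euler_mascheroni_upper)
  also have "\<dots> \<le> 6.12044 - 8 * 0.69314718 + 1 / 510"
    using harm_255 ln_256 ln_2_ge by simp
  also have "\<dots> \<le> ln 1.7811" using ln_17811_ge by simp
  finally have "exp (euler_mascheroni :: real) \<le> exp (ln 1.7811)" by (simp only: exp_le_cancel_iff)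
  also have "exp (ln (1.7811::real)) = 1.7811" by (rule exp_ln) simp
  finally show ?thesis .
qed

theorem theorem5p3:
  fixes k n :: nat and c :: "nat \<Rightarrow> nat"
  assumes "k \<ge> 1" and "n \<ge> 2" and "\<forall>\<beta>\<le>k. c \<beta> \<in> {0, 1}"
  defines "lam \<equiv> real (c 0) * (real n - 1) + real (c 1) * real k * (ln (real n - 1) + euler_mascheroni)
              + pi\<^sup>2 / 6 * (\<Sum>\<beta>=2..k. real (c \<beta>) * real (k choose \<beta>))"
    and "lam' \<equiv> real (compl_vec c 0) * (real n - 1) + real (compl_vec c 1) * real k * (ln (real n - 1) + euler_mascheroni)
              + pi\<^sup>2 / 6 * (\<Sum>\<beta>=2..k. real (compl_vec c \<beta>) * real (k choose \<beta>))"
  shows "(\<forall>m\<in>{0..n}. real (O_C c k n m) \<le> Omax (compl_vec c) k n (int n - int m))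
    \<and> (\<Sum>m=0..n. Omax c k n (int m)) / (\<Sum>m=0..n. real (O_C c k n m)) \<le> exp lam
    \<and> (\<Sum>m=0..n. Omax (compl_vec c) k n (int m)) / (\<Sum>m=0..n. real (O_C c k n m)) \<le> exp lam'
    \<and> (k = 1 \<and> c 0 = 0 \<and> c 1 = 1 \<longrightarrow>
        (\<Sum>m=0..n. su_max n m) / (\<Sum>m=0..n. real (stirling n m))
          \<le> (real n - 1) / real n * exp ((\<Sum>j=2..n. 1 / (real j - 1)) - ln (real n - 1))
        \<and> (real n - 1) / real n * exp ((\<Sum>j=2..n. 1 / (real j - 1)) - ln (real n - 1))
          \<le> exp euler_mascheroni
        \<and> exp (euler_mascheroni :: real) \<le> 1.7811)"
proof -
  have c': "\<forall>\<beta>\<le>k. compl_vec c \<beta> \<in> {0, 1}" using compl_vec_01 by blast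
  have part_i: "\<forall>m\<in>{0..n}. real (O_C c k n m) \<le> Omax (compl_vec c) k n (int n - int m)"
    using O_C_le_Omax_compl_vec[OF assms(3)] assms(2) by simp
  show ?thesis
    using part_i Omax_ratio_le_exp[OF assms(3,1,2), of c] Omax_ratio_le_exp[OF c' assms(1,2), of c]
      stirling_max_ratio_le[OF assms(2)] exp_euler_mascheroni_le
    unfolding lam_def lam'_def by blast
qed

end
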